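(* For $A\in\{D,C\}$ and all $\sigma,\tau\in\Lambda^r_A$: $\sigma\le^r_A\tau$ if and only if $\sigma\le_A\tau$. That is, $\le^r_D$ and $\le^r_C$ are the restrictions to the restricted types of $\le_D$ and $\le_C$.
   Context: Let $R=\{\bot\sqsubset\top\}$ be the two-point lattice, and write $\psi$ for the type constant $\psi_\top$. Full types: - $\Lambda_R$: $\rho::=\psi_a\mid\omega\mid\rho\wedge\rho$ ($a\in R$); - $\Lambda_D$: $\delta::=\rho\mid\kappa\to\rho\mid\omega\mid\delta\wedge\delta$; - $\Lambda_C$: $\kappa::=\delta\times\kappa\mid\omega\mid\kappa\wedge\kappa$. The relations $\le_R,\le_D,\le_C$ are the least reflexive, transitive relations with $\sigma\wedge\tau\le\sigma,\tau$, $\sigma\le\omega$, $\rho\le\sigma,\tau\Rightarrow\rho\le\sigma\wedge\tau$, and additionally: - $\psi_\bot\sim\omega$ and $\psi_{a\sqcup b}\sim\psi_a\wedge\psi_b$; - $\le_R\subseteq\le_D$; - $\omega\le_D\omega\to\omega$; - $\psi_a\le_D\omega\to\psi_a\le_D\psi_a$; - $\omega\le_C\omega\times\omega$; - $(\kappa\to\rho_1)\wedge(\kappa\to\rho_2)\le_D\kappa\to(\rho_1\wedge\rho_2)$; - $(\delta_1\times\kappa_1)\wedge(\delta_2\times\kappa_2)\le_C(\delta_1\wedge\delta_2)\times(\kappa_1\wedge\kappa_2)$; - if $\kappa_2\le_C\kappa_1$ and $\rho_1\le_R\rho_2$ then $\kappa_1\to\rho_1\le_D\kappa_2\to\rho_2$;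 - $\times$ is covariant in both arguments. Restricted types: $\Lambda^r_D$: $\delta::=\kappa\to\psi\mid\delta\wedge\delta$; $\Lambda^r_C$: $\kappa::=\omega\mid\delta\times\kappa\mid\kappa\wedge\kappa$. Thus $\Lambda^r_A\subseteq\Lambda_A$. $\le^r_D$ and $\le^r_C$ are the least relations on $\Lambda^r_D$ and $\Lambda^r_C$ that are reflexive and transitive, satisfy $\sigma\wedge\tau\le\sigma$, $\sigma\wedge\tau\le\tau$, and $\sigma\le\tau_1,\tau_2\Rightarrow\sigma\le\tau_1\wedge\tau_2$, and in addition: - $\kappa\le^r_C\omega$; - $(\delta_1\times\kappa_1)\wedge(\delta_2\times\kappa_2)\le^r_C(\delta_1\wedge\delta_2)\times(\kappa_1\wedge\kappa_2)$; - if $\delta_1\le^r_D\delta_2$ and $\kappa_1\le^r_C\kappa_2$ then $\delta_1\times\kappa_1\le^r_C\delta_2\times\kappa_2$; - if $\kappa_2\le^r_C\kappa_1$ then $\kappa_1\to\psi\le^r_D\kappa_2\to\psi$. *)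

theory Defs
  imports Main
begin

(* Raw type syntax shared by all sorts; the lattice R = {bot < top} is bool
   (False = bot, True = top, join = disjunction).  Psi a is the constant psi_a,
   Om is omega, And is the intersection, Arr k r is k -> r, Prod d k is d x k. *)
datatype ty = Psi bool | Om | And ty ty | Arr ty ty | Prod ty ty

abbreviation psi :: ty where "psi \<equiv> Psi True"

fun isR :: "ty \<Rightarrow> bool" where
  "isR (Psi a) = True"
| "isR Om = True"
| "isR (And s t) = (isR s \<and> isR t)"
| "isR _ = False"

fun isD :: "ty \<Rightarrow> bool" and isC :: "ty \<Rightarrow> bool" where
  "isD (Psi a) = True"
| "isD Om = True"
| "isD (And s t) = (isD s \<and> isD t)"
| "isD (Arr k r) = (isC k \<and> isR r)"
| "isD (Prod d k) = False"
| "isC Om = True"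
| "isC (And s t) = (isC s \<and> isC t)"
| "isC (Prod d k) = (isD d \<and> isC k)"
| "isC (Psi a) = False"
| "isC (Arr k r) = False"

inductive leR :: "ty \<Rightarrow> ty \<Rightarrow> bool" where
  R_refl: "isR s \<Longrightarrow> leR s s"
| R_trans: "leR s t \<Longrightarrow> leR t u \<Longrightarrow> leR s u"
| R_andL: "isR s \<Longrightarrow> isR t \<Longrightarrow> leR (And s t) s"
| R_andR: "isR s \<Longrightarrow> isR t \<Longrightarrow> leR (And s t) t"
| R_top: "isR s \<Longrightarrow> leR s Om"
| R_glb: "leR r s \<Longrightarrow> leR r t \<Longrightarrow> leR r (And s t)"
| R_bot1: "leR (Psi False) Om"
| R_bot2: "leR Om (Psi False)"
| R_join1: "leR (Psi (a \<or> b)) (And (Psi a) (Psi b))"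
| R_join2: "leR (And (Psi a) (Psi b)) (Psi (a \<or> b))"

inductive leD :: "ty \<Rightarrow> ty \<Rightarrow> bool" and leC :: "ty \<Rightarrow> ty \<Rightarrow> bool" where
  D_refl: "isD s \<Longrightarrow> leD s s"
| D_trans: "leD s t \<Longrightarrow> leD t u \<Longrightarrow> leD s u"
| D_andL: "isD s \<Longrightarrow> isD t \<Longrightarrow> leD (And s t) s"
| D_andR: "isD s \<Longrightarrow> isD t \<Longrightarrow> leD (And s t) t"
| D_top: "isD s \<Longrightarrow> leD s Om"
| D_glb: "leD r s \<Longrightarrow> leD r t \<Longrightarrow> leD r (And s t)"
| D_R: "leR s t \<Longrightarrow> leD s t"
| D_om_arr: "leD Om (Arr Om Om)"
| D_psi1: "leD (Psi a) (Arr Om (Psi a))"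
| D_psi2: "leD (Arr Om (Psi a)) (Psi a)"
| D_arr_and: "isC k \<Longrightarrow> isR r1 \<Longrightarrow> isR r2 \<Longrightarrow>
     leD (And (Arr k r1) (Arr k r2)) (Arr k (And r1 r2))"
| D_arr: "leC k2 k1 \<Longrightarrow> leR r1 r2 \<Longrightarrow> leD (Arr k1 r1) (Arr k2 r2)"
| C_refl: "isC s \<Longrightarrow> leC s s"
| C_trans: "leC s t \<Longrightarrow> leC t u \<Longrightarrow> leC s u"
| C_andL: "isC s \<Longrightarrow> isC t \<Longrightarrow> leC (And s t) s"
| C_andR: "isC s \<Longrightarrow> isC t \<Longrightarrow> leC (And s t) t"
| C_top: "isC s \<Longrightarrow> leC s Om"
| C_glb: "leC r s \<Longrightarrow> leC r t \<Longrightarrow> leC r (And s t)"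
| C_om_prod: "leC Om (Prod Om Om)"
| C_prod_and: "isD d1 \<Longrightarrow> isD d2 \<Longrightarrow> isC k1 \<Longrightarrow> isC k2 \<Longrightarrow>
     leC (And (Prod d1 k1) (Prod d2 k2)) (Prod (And d1 d2) (And k1 k2))"
| C_prod: "leD d1 d2 \<Longrightarrow> leC k1 k2 \<Longrightarrow> leC (Prod d1 k1) (Prod d2 k2)"

fun isRD :: "ty \<Rightarrow> bool" and isRC :: "ty \<Rightarrow> bool" where
  "isRD (Arr k r) = (isRC k \<and> r = psi)"
| "isRD (And s t) = (isRD s \<and> isRD t)"
| "isRD (Psi a) = False"
| "isRD Om = False"
| "isRD (Prod d k) = False"
| "isRC Om = True"
| "isRC (Prod d k) = (isRD d \<and> isRC k)"
| "isRC (And s t) = (isRC s \<and> isRC t)"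
| "isRC (Psi a) = False"
| "isRC (Arr k r) = False"

inductive leRD :: "ty \<Rightarrow> ty \<Rightarrow> bool" and leRC :: "ty \<Rightarrow> ty \<Rightarrow> bool" where
  RD_refl: "isRD s \<Longrightarrow> leRD s s"
| RD_trans: "leRD s t \<Longrightarrow> leRD t u \<Longrightarrow> leRD s u"
| RD_andL: "isRD s \<Longrightarrow> isRD t \<Longrightarrow> leRD (And s t) s"
| RD_andR: "isRD s \<Longrightarrow> isRD t \<Longrightarrow> leRD (And s t) t"
| RD_glb: "leRD r s \<Longrightarrow> leRD r t \<Longrightarrow> leRD r (And s t)"
| RD_arr: "leRC k2 k1 \<Longrightarrow> leRD (Arr k1 psi) (Arr k2 psi)"
| RC_refl: "isRC s \<Longrightarrow> leRC s s"
| RC_trans: "leRC s t \<Longrightarrow> leRC t u \<Longrightarrow> leRC s u"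
| RC_andL: "isRC s \<Longrightarrow> isRC t \<Longrightarrow> leRC (And s t) s"
| RC_andR: "isRC s \<Longrightarrow> isRC t \<Longrightarrow> leRC (And s t) t"
| RC_glb: "leRC r s \<Longrightarrow> leRC r t \<Longrightarrow> leRC r (And s t)"
| RC_top: "isRC s \<Longrightarrow> leRC s Om"
| RC_prod_and: "isRD d1 \<Longrightarrow> isRD d2 \<Longrightarrow> isRC k1 \<Longrightarrow> isRC k2 \<Longrightarrow>
     leRC (And (Prod d1 k1) (Prod d2 k2)) (Prod (And d1 d2) (And k1 k2))"
| RC_prod: "leRD d1 d2 \<Longrightarrow> leRC k1 k2 \<Longrightarrow> leRC (Prod d1 k1) (Prod d2 k2)"

end

theory Submission imports Defs begin

text \<open>
  Both preorders are characterised by an atom-wise criterion. Up to equivalence a D-type is an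
  intersection of arrows \<open>\<kappa> \<rightarrow> \<psi>\<close> (with \<open>\<psi> \<sim> \<omega> \<rightarrow> \<psi>\<close>, and arrows into an R-type
  equivalent to \<open>\<omega>\<close> dropped), and \<open>\<sigma> \<le> \<tau>\<close> means that every domain \<open>\<kappa>'\<close> of \<open>\<tau>\<close> lies below
  some domain \<open>\<kappa>\<close> of \<open>\<sigma>\<close>. A C-type is an intersection of products, and \<open>\<sigma> \<le> \<tau>\<close> means that
  every product \<open>\<delta> \<times> \<kappa>\<close> of \<open>\<tau>\<close> has \<open>\<delta>\<close> above the meet of all first components of \<open>\<sigma>\<close>
  and \<open>\<kappa>\<close> above the meet of all second components. This criterion is reflexive and transitive
  (by induction on the total size) and is preserved by every rule of \<open>\<le>\<^sub>D, \<le>\<^sub>C\<close>. On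
  restricted types it implies \<open>\<le>\<^sup>r\<close>: the meets involved are again restricted, and the
  distributivity rule of \<open>\<le>\<^sup>r\<^sub>C\<close> compares a meet of products with the product of the meets.
\<close>

text \<open>\<open>Psi\<close> weighs 2 so that its arrow domain \<open>Om\<close> is lighter.\<close>

fun weight :: "ty \<Rightarrow> nat" where
  "weight (Psi a) = 2"
| "weight Om = 1"
| "weight (And s t) = Suc (weight s + weight t)"
| "weight (Arr k r) = Suc (weight k + weight r)"
| "weight (Prod d k) = Suc (weight d + weight k)"

abbreviation total_weight :: "ty list \<Rightarrow> nat" where
  "total_weight xs \<equiv> sum_list (map weight xs)"

fun trivial_R :: "ty \<Rightarrow> bool" where
  "trivial_R (Psi a) \<longleftrightarrow> \<not> a"
| "trivial_R (And s t) \<longleftrightarrow> trivial_R s \<and> trivial_R t"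
| "trivial_R _ \<longleftrightarrow> True"

fun arrow_doms :: "ty \<Rightarrow> ty list" where
  "arrow_doms (Psi a) = (if a then [Om] else [])"
| "arrow_doms (And s t) = arrow_doms s @ arrow_doms t"
| "arrow_doms (Arr k r) = (if trivial_R r then [] else [k])"
| "arrow_doms _ = []"

fun factors :: "ty \<Rightarrow> (ty \<times> ty) list" where
  "factors (And s t) = factors s @ factors t"
| "factors (Prod d k) = [(d, k)]"
| "factors _ = []"

abbreviation arrow_doms_of :: "ty list \<Rightarrow> ty list" where
  "arrow_doms_of ds \<equiv> concat (map arrow_doms ds)"

abbreviation factors_of :: "ty list \<Rightarrow> (ty \<times> ty) list" where
  "factors_of ks \<equiv> concat (map factors ks)"

lemma weight_arrow_doms: "k \<in> set (arrow_doms t) \<Longrightarrow> weight k < weight t"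
  by (induction t) (auto split: if_splits)

lemma weight_factors: "(d, k) \<in> set (factors t) \<Longrightarrow> weight d + weight k < weight t"
  by (induction t) auto

lemma weight_arrow_doms_of: "k \<in> set (arrow_doms_of ds) \<Longrightarrow> weight k < total_weight ds"
  by (induction ds) (auto dest: weight_arrow_doms simp del: set_concat)

lemma total_weight_factors_of:
  "total_weight (map fst (factors_of ks)) + total_weight (map snd (factors_of ks)) \<le> total_weight ks"
proof -
  have "total_weight (map fst (factors t)) + total_weight (map snd (factors t)) \<le> weight t" for t
    by (induction t) auto
  then show ?thesis
    by (induction ks) (auto intro: add_mono[THEN order_trans[rotated]])
qed

text \<open>The list argument stands for the intersection of its elements.\<close>

function below_D :: "ty list \<Rightarrow> ty \<Rightarrow> bool" and below_C :: "ty list \<Rightarrow> ty \<Rightarrow> bool" where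
  "below_D ds t \<longleftrightarrow> (\<forall>k'\<in>set (arrow_doms t). \<exists>k\<in>set (arrow_doms_of ds). below_C [k'] k)"
| "below_C ks t \<longleftrightarrow> (\<forall>(d, k)\<in>set (factors t).
     below_D (map fst (factors_of ks)) d \<and> below_C (map snd (factors_of ks)) k)"
  by pat_completeness auto
termination
proof (relation "measure (case_sum (\<lambda>(ds, t). total_weight ds + weight t)
                                   (\<lambda>(ks, t). total_weight ks + weight t))", goal_cases)
  case (2 ds t k' k)
  then show ?case using weight_arrow_doms[of k' t] weight_arrow_doms_of[of k ds] by simp
next
  case (3 ks t p d k)
  then show ?case using weight_factors[of d k t] total_weight_factors_of[of ks] by simp
next
  case (4 ks t p d k)
  then show ?case using weight_factors[of d k t] total_weight_factors_of[of ks] by simp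
qed simp

declare below_D.simps [simp del] below_C.simps [simp del]

lemma below_mono:
  shows "below_D ds t \<Longrightarrow> set (arrow_doms_of ds) \<subseteq> set (arrow_doms_of ds') \<Longrightarrow> below_D ds' t"
    and "below_C ks t \<Longrightarrow> set (factors_of ks) \<subseteq> set (factors_of ks') \<Longrightarrow> below_C ks' t"
proof (induction ds t and ks t arbitrary: ds' and ks' rule: below_D_below_C.induct)
  case (1 ds t)
  then show ?case unfolding below_D.simps[of ds t] below_D.simps[of ds' t] by blast
next
  case (2 ks t)
  have "set (arrow_doms_of (map fst (factors_of ks))) \<subseteq> set (arrow_doms_of (map fst (factors_of ks')))"
   and "set (factors_of (map snd (factors_of ks))) \<subseteq> set (factors_of (map snd (factors_of ks')))"
    using "2.prems"(2) by auto
  with 2 show ?case by (fastforce simp: below_C.simps[of ks t] below_C.simps[of ks' t])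
qed

lemma below_Om: "below_D ds Om" "below_C ks Om"
  by (simp_all add: below_D.simps[of ds] below_C.simps[of ks])

lemma below_And:
  "below_D ds (And s t) \<longleftrightarrow> below_D ds s \<and> below_D ds t"
  "below_C ks (And s t) \<longleftrightarrow> below_C ks s \<and> below_C ks t"
  by (auto simp: below_D.simps[of ds] below_C.simps[of ks])

lemma below_refl: "below_D [t] t \<and> below_C [t] t"
proof (induction t)
  case (And s t)
  have "below_D [And s t] s" "below_C [And s t] s"
    using And.IH(1) by (auto intro: below_mono)
  moreover have "below_D [And s t] t" "below_C [And s t] t"
    using And.IH(2) by (auto intro: below_mono)
  ultimately show ?case by (simp add: below_And)
next
  case (Arr k r)
  then show ?case by (simp add: below_D.simps[of _ "Arr k r"] below_C.simps[of _ "Arr k r"])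
next
  case (Prod d k)
  then show ?case by (simp add: below_D.simps[of _ "Prod d k"] below_C.simps[of _ "Prod d k"])
qed (simp_all add: below_D.simps[of _ "Psi _"] below_C.simps[of _ "Psi _"] below_Om)

lemma below_of_subset:
  shows "set (arrow_doms t) \<subseteq> set (arrow_doms_of ds) \<Longrightarrow> below_D ds t"
    and "set (factors t) \<subseteq> set (factors_of ks) \<Longrightarrow> below_C ks t"
  using below_refl[of t] below_mono[of "[t]" t ds] below_mono[of "[t]" t ks] by auto

lemma below_C_components:
  assumes "\<forall>y\<in>set Y. below_C X y"
  shows "\<forall>y\<in>set (map fst (factors_of Y)). below_D (map fst (factors_of X)) y"
    and "\<forall>y\<in>set (map snd (factors_of Y)). below_C (map snd (factors_of X)) y"
proof -
  have "below_D (map fst (factors_of X)) d \<and> below_C (map snd (factors_of X)) k"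
    if "(d, k) \<in> set (factors_of Y)" for d k
  proof -
    from that obtain y where y: "y \<in> set Y" and dk: "(d, k) \<in> set (factors y)" by auto
    from y assms have "below_C X y" by blast
    with dk show ?thesis unfolding below_C.simps[of X y] by blast
  qed
  then show "\<forall>y\<in>set (map fst (factors_of Y)). below_D (map fst (factors_of X)) y"
    and "\<forall>y\<in>set (map snd (factors_of Y)). below_C (map snd (factors_of X)) y"
    by (auto simp del: set_concat)
qed

lemma below_trans_lists:
  "((\<forall>y\<in>set Y. below_D X y) \<longrightarrow> below_D Y z \<longrightarrow> below_D X z) \<and>
   ((\<forall>y\<in>set Y. below_C X y) \<longrightarrow> below_C Y z \<longrightarrow> below_C X z)"
proof (induction "total_weight X + total_weight Y + weight z" arbitrary: X Y z rule: less_induct)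
  case less
  have D: "below_D X z" if XY: "\<forall>y\<in>set Y. below_D X y" and Yz: "below_D Y z"
    unfolding below_D.simps[of X z]
  proof
    fix k'' assume k'': "k'' \<in> set (arrow_doms z)"
    then obtain k' where k': "k' \<in> set (arrow_doms_of Y)" and "below_C [k''] k'"
      using Yz unfolding below_D.simps[of Y z] by blast
    moreover obtain y where "y \<in> set Y" and "k' \<in> set (arrow_doms y)"
      using k' by auto
    moreover from this XY have "below_D X y" by blast
    ultimately obtain k where k: "k \<in> set (arrow_doms_of X)" and "below_C [k'] k"
      unfolding below_D.simps[of X y] by blast
    moreover have "total_weight [k''] + total_weight [k'] + weight k < total_weight X + total_weight Y + weight z"
      using weight_arrow_doms[OF k''] weight_arrow_doms_of[OF k'] weight_arrow_doms_of[OF k] by simp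
    ultimately show "\<exists>k\<in>set (arrow_doms_of X). below_C [k''] k"
      using less[of "[k'']" "[k']" k] \<open>below_C [k''] k'\<close> by auto
  qed
  have C: "below_C X z" if XY: "\<forall>y\<in>set Y. below_C X y" and Yz: "below_C Y z"
    unfolding below_C.simps[of X z]
  proof (intro ballI, clarify)
    fix d k assume p: "(d, k) \<in> set (factors z)"
    let ?X1 = "map fst (factors_of X)" and ?Y1 = "map fst (factors_of Y)"
    let ?X2 = "map snd (factors_of X)" and ?Y2 = "map snd (factors_of Y)"
    have "total_weight ?X1 + total_weight ?Y1 + weight d < total_weight X + total_weight Y + weight z"
     and "total_weight ?X2 + total_weight ?Y2 + weight k < total_weight X + total_weight Y + weight z"
      using weight_factors[OF p] total_weight_factors_of[of X] total_weight_factors_of[of Y] by simp_all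
    moreover have "below_D ?Y1 d" "below_C ?Y2 k"
      using Yz p unfolding below_C.simps[of Y z] by blast+
    ultimately show "below_D ?X1 d \<and> below_C ?X2 k"
      using less[of ?X1 ?Y1 d] less[of ?X2 ?Y2 k] below_C_components[OF XY] by blast
  qed
  from D C show ?case by blast
qed

lemma below_trans:
  shows "below_D [s] t \<Longrightarrow> below_D [t] u \<Longrightarrow> below_D [s] u"
    and "below_C [s] t \<Longrightarrow> below_C [t] u \<Longrightarrow> below_C [s] u"
  using below_trans_lists[where X = "[s]" and Y = "[t]" and z = u] by simp_all

lemma leR_isR: "leR s t \<Longrightarrow> isR s \<and> isR t"
  by (induction rule: leR.induct) auto

lemma leR_trivial_R: "leR s t \<Longrightarrow> trivial_R s \<Longrightarrow> trivial_R t"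
  by (induction rule: leR.induct) auto

lemma arrow_doms_R: "isR r \<Longrightarrow> set (arrow_doms r) = (if trivial_R r then {} else {Om})"
  by (induction r) auto

lemma leD_leC_imp_below:
  shows "leD s t \<Longrightarrow> below_D [s] t"
    and "leC s t \<Longrightarrow> below_C [s] t"
proof (induction rule: leD_leC.inducts)
  case (D_R s t)
  then have "set (arrow_doms t) \<subseteq> set (arrow_doms s)"
    using leR_isR[OF D_R] leR_trivial_R[OF D_R] by (simp add: arrow_doms_R)
  then show ?case by (intro below_of_subset) simp
qed (auto simp: below_refl below_Om below_And below_of_subset
       below_D.simps[of _ "Arr _ _"] below_D.simps[of _ "Psi _"] below_C.simps[of _ "Prod _ _"]
       intro: below_trans dest: leR_trivial_R)

declare RD_trans [trans] RC_trans [trans]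

text \<open>Unlike \<open>foldr And xs Om\<close>, a nonempty meet of restricted D-types is restricted.\<close>

fun meet :: "ty list \<Rightarrow> ty" where
  "meet [] = Om"
| "meet [x] = x"
| "meet (x # y # xs) = And x (meet (y # xs))"

lemma meet_Cons: "xs \<noteq> [] \<Longrightarrow> meet (x # xs) = And x (meet xs)"
  by (cases xs) auto

lemma isRD_meet: "xs \<noteq> [] \<Longrightarrow> \<forall>x\<in>set xs. isRD x \<Longrightarrow> isRD (meet xs)"
  by (induction xs rule: meet.induct) auto

lemma isRC_meet: "\<forall>x\<in>set xs. isRC x \<Longrightarrow> isRC (meet xs)"
  by (induction xs rule: meet.induct) auto

lemma leRD_meet: "\<forall>x\<in>set xs. isRD x \<Longrightarrow> x \<in> set xs \<Longrightarrow> leRD (meet xs) x"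
proof (induction xs rule: meet.induct)
  case (3 y z xs)
  have "isRD (meet (z # xs))" using "3.prems"(1) by (intro isRD_meet) auto
  with 3 show ?case by (auto intro: RD_andL RD_trans[OF RD_andR] RD_refl)
qed (auto intro: RD_refl)

lemma leRC_meet: "\<forall>x\<in>set xs. isRC x \<Longrightarrow> x \<in> set xs \<Longrightarrow> leRC (meet xs) x"
proof (induction xs rule: meet.induct)
  case (3 y z xs)
  have "isRC (meet (z # xs))" using "3.prems"(1) by (intro isRC_meet) auto
  with 3 show ?case by (auto intro: RC_andL RC_trans[OF RC_andR] RC_refl)
qed (auto intro: RC_refl)

lemma leRC_meet_greatest: "isRC s \<Longrightarrow> \<forall>y\<in>set ys. leRC s y \<Longrightarrow> leRC s (meet ys)"
  by (induction ys rule: meet.induct) (auto intro: RC_top RC_glb)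

lemma leRC_meet_Prod:
  assumes "P \<noteq> []" and "\<forall>(d, k)\<in>set P. isRD d \<and> isRC k"
  shows "leRC (meet (map (\<lambda>(d, k). Prod d k) P)) (Prod (meet (map fst P)) (meet (map snd P)))"
  using assms
proof (induction P rule: list_nonempty_induct)
  case (single p)
  then show ?case by (auto intro!: RC_refl)
next
  case (cons p P)
  obtain d k where p: "p = (d, k)" by fastforce
  let ?ds = "meet (map fst P)" and ?ks = "meet (map snd P)"
  have restricted: "isRD d" "isRC k" "isRD ?ds" "isRC ?ks"
    "isRC (meet (map (\<lambda>(d, k). Prod d k) P))"
    using cons p by (auto intro!: isRD_meet isRC_meet) fast+
  have "leRC (meet (map (\<lambda>(d, k). Prod d k) (p # P))) (And (Prod d k) (Prod ?ds ?ks))"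
    using cons restricted p by (auto simp: meet_Cons intro!: RC_glb RC_andL RC_trans[OF RC_andR])
  also have "leRC \<dots> (Prod (And d ?ds) (And k ?ks))"
    using restricted by (intro RC_prod_and)
  finally show ?case using cons p by (simp add: meet_Cons)
qed

lemma arrow_doms_RD:
  "isRD d \<Longrightarrow> k \<in> set (arrow_doms d) \<Longrightarrow> isRC k \<and> leRD d (Arr k psi)"
  by (induction d) (auto intro: RD_trans[OF RD_andL] RD_trans[OF RD_andR] RD_refl)

lemma factors_RC:
  "isRC c \<Longrightarrow> (d, k) \<in> set (factors c) \<Longrightarrow> isRD d \<and> isRC k \<and> leRC c (Prod d k)"
  by (induction c) (auto intro: RC_trans[OF RC_andL] RC_trans[OF RC_andR] RC_refl)

lemma leRD_of_arrow_doms: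
  "isRD t \<Longrightarrow> \<forall>k\<in>set (arrow_doms t). leRD s (Arr k psi) \<Longrightarrow> leRD s t"
  by (induction t) (auto intro: RD_glb)

lemma leRC_of_factors:
  "isRC t \<Longrightarrow> isRC s \<Longrightarrow> \<forall>(d, k)\<in>set (factors t). leRC s (Prod d k) \<Longrightarrow> leRC s t"
  by (induction t) (auto intro: RC_top RC_glb)

lemma below_D_nonempty: "below_D ds t \<Longrightarrow> isRD t \<Longrightarrow> ds \<noteq> []"
proof -
  assume "below_D ds t" and "isRD t"
  moreover have "isRD t \<Longrightarrow> arrow_doms t \<noteq> []" by (induction t) auto
  ultimately show "ds \<noteq> []" unfolding below_D.simps[of ds t] by fastforce
qed

lemma leRC_meet_factors:
  assumes "\<forall>c\<in>set ks. isRC c" and "factors_of ks \<noteq> []"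
  shows "leRC (meet ks) (Prod (meet (map fst (factors_of ks))) (meet (map snd (factors_of ks))))"
proof -
  have factors_restricted: "\<forall>(d, k)\<in>set (factors_of ks). isRD d \<and> isRC k"
    using assms(1) factors_RC by fastforce
  have "\<forall>y\<in>set (map (\<lambda>(d, k). Prod d k) (factors_of ks)). leRC (meet ks) y"
  proof
    fix y assume "y \<in> set (map (\<lambda>(d, k). Prod d k) (factors_of ks))"
    then obtain c d k where c: "c \<in> set ks" and dk: "(d, k) \<in> set (factors c)" and y: "y = Prod d k"
      by auto
    have "leRC (meet ks) c" using assms(1) c by (rule leRC_meet)
    also have "leRC c y" using factors_RC[OF _ dk] assms(1) c y by blast
    finally show "leRC (meet ks) y" .
  qed
  then have "leRC (meet ks) (meet (map (\<lambda>(d, k). Prod d k) (factors_of ks)))"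
    using assms(1) by (intro leRC_meet_greatest isRC_meet)
  also have "leRC \<dots> (Prod (meet (map fst (factors_of ks))) (meet (map snd (factors_of ks))))"
    using assms(2) factors_restricted by (rule leRC_meet_Prod)
  finally show ?thesis .
qed

lemma below_imp_leRD_leRC:
  shows "below_D ds t \<Longrightarrow> \<forall>d\<in>set ds. isRD d \<Longrightarrow> isRD t \<Longrightarrow> leRD (meet ds) t"
    and "below_C ks t \<Longrightarrow> \<forall>c\<in>set ks. isRC c \<Longrightarrow> isRC t \<Longrightarrow> leRC (meet ks) t"
proof (induction ds t and ks t rule: below_D_below_C.induct)
  case (1 ds t)
  have "leRD (meet ds) (Arr k' psi)" if k': "k' \<in> set (arrow_doms t)" for k'
  proof -
    obtain d k where d: "d \<in> set ds" and k: "k \<in> set (arrow_doms d)" and "below_C [k'] k"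
      using "1.prems"(1) k' unfolding below_D.simps[of ds t] by auto
    moreover have "isRC k'" using arrow_doms_RD[OF "1.prems"(3) k'] by blast
    moreover have "isRC k" and dk: "leRD d (Arr k psi)"
      using arrow_doms_RD[OF _ k] "1.prems"(2) d by auto
    ultimately have "leRC k' k" using "1.IH"[OF k'] d k by fastforce
    have "leRD (meet ds) d" using "1.prems"(2) d by (rule leRD_meet)
    also note dk
    also have "leRD (Arr k psi) (Arr k' psi)" using \<open>leRC k' k\<close> by (rule RD_arr)
    finally show ?thesis .
  qed
  then show ?case using leRD_of_arrow_doms[OF "1.prems"(3)] by blast
next
  case (2 ks t)
  let ?ds = "map fst (factors_of ks)" and ?cs = "map snd (factors_of ks)"
  have factors_restricted: "\<forall>d\<in>set ?ds. isRD d" "\<forall>c\<in>set ?cs. isRC c"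
    using "2.prems"(2) factors_RC by fastforce+
  have "leRC (meet ks) (Prod d k)" if dk: "(d, k) \<in> set (factors t)" for d k
  proof -
    have "isRD d" "isRC k" using factors_RC[OF "2.prems"(3) dk] by auto
    moreover have "below_D ?ds d" "below_C ?cs k"
      using "2.prems"(1) dk unfolding below_C.simps[of ks t] by auto
    ultimately have "leRD (meet ?ds) d" "leRC (meet ?cs) k" "?ds \<noteq> []"
      using "2.IH"[OF dk refl] factors_restricted below_D_nonempty by blast+
    have "leRC (meet ks) (Prod (meet ?ds) (meet ?cs))"
      using "2.prems"(2) \<open>?ds \<noteq> []\<close> by (intro leRC_meet_factors) simp_all
    also have "leRC \<dots> (Prod d k)"
      using \<open>leRD (meet ?ds) d\<close> \<open>leRC (meet ?cs) k\<close> by (rule RC_prod)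
    finally show ?thesis .
  qed
  then show ?case using leRC_of_factors[OF "2.prems"(3) isRC_meet[OF "2.prems"(2)]] by blast
qed

lemma isRD_isD: "isRD t \<Longrightarrow> isD t" and isRC_isC: "isRC t \<Longrightarrow> isC t"
  by (induction t and t rule: isRD_isRC.induct) auto

lemma leRD_leRC_imp_leD_leC:
  shows "leRD s t \<Longrightarrow> leD s t"
    and "leRC s t \<Longrightarrow> leC s t"
proof (induction rule: leRD_leRC.inducts)
  case (RD_arr k2 k1)
  then show ?case using D_arr R_refl[of psi] by simp
qed (auto intro: leD_leC.intros isRD_isD isRC_isC)

theorem theorem6p3:
  shows "(\<forall>s t. isRD s \<longrightarrow> isRD t \<longrightarrow> (leRD s t \<longleftrightarrow> leD s t)) \<and>
         (\<forall>s t. isRC s \<longrightarrow> isRC t \<longrightarrow> (leRC s t \<longleftrightarrow> leC s t))"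
proof (intro conjI allI impI iffI)
  fix s t
  show "leRD s t \<Longrightarrow> leD s t" and "leRC s t \<Longrightarrow> leC s t"
    by (fact leRD_leRC_imp_leD_leC)+
  show "leRD s t" if "isRD s" "isRD t" "leD s t"
    using below_imp_leRD_leRC(1)[OF leD_leC_imp_below(1)] that by simp
  show "leRC s t" if "isRC s" "isRC t" "leC s t"
    using below_imp_leRD_leRC(2)[OF leD_leC_imp_below(2)] that by simp
qed

end
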